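(* Let $k\equiv5\pmod{10}$. Then $\operatorname{Ker}\nu_{G^k}=\{M\in\Gamma_{\theta,5}: M\equiv\pm\begin{pmatrix}1&0\\0&1\end{pmatrix}\pmod5\}$.
   Context: $\Gamma_{\theta,5}=\{M\in SL(2,\mathbb{Z}): M\equiv\pm\begin{pmatrix}1&0\\0&1\end{pmatrix}\text{ or }\pm\begin{pmatrix}0&-1\\1&0\end{pmatrix}\pmod 5\}$. For $M=\begin{pmatrix} a&b\\ c&d\end{pmatrix}\in\Gamma_{\theta,5}$ define $g(M)=\frac{6b}{5}+\frac{2ab}{5}+\frac{2cd}{5}$ if $M\equiv I$, $\frac{24b}{5}+\frac{2ab}{5}+\frac{2cd}{5}$ if $M\equiv -I$, $5+\frac{6d}{5}+\frac{2ab}{5}+\frac{2cd}{5}$ if $M\equiv\begin{pmatrix}0&-1\\1&0\end{pmatrix}$, $5-\frac{6d}{5}+\frac{2ab}{5}+\frac{2cd}{5}$ if $M\equiv\begin{pmatrix}0&1\\-1&0\end{pmatrix}$ (all mod 5). For $k\in\mathbb{Z}$, $\nu_{G^k}(M)=\exp\!\left(\frac{\pi i k}{5}g(M)\right)$; this is the multiplier system of $G^k$, where $G(\tau)=\eta^6(\tau)/\big(\theta\begin{bmatrix}3/5\\3/5\end{bmatrix}(0,\tau)\theta\begin{bmatrix}3/5\\7/5\end{bmatrix}(0,\tau)\big)$, i.e. $G^k(M\tau)=\nu_{G^k}(M)(c\tau+d)^{2k}G^k(\tau)$. $\operatorname{Ker}\nu_{G^k}=\{M\in\Gamma_{\theta,5}:\nu_{G^k}(M)=1\}$.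 *)

theory Defs
  imports Complex_Main
begin

text \<open>A 2x2 integer matrix (a b; c d) is represented as the tuple (a, b, c, d).\<close>
type_synonym mat2 = "int \<times> int \<times> int \<times> int"

definition SL2Z :: "mat2 set" where
  "SL2Z = {(a, b, c, d). a * d - b * c = 1}"

definition mcong5 :: "mat2 \<Rightarrow> mat2 \<Rightarrow> bool" where
  "mcong5 M N = (case M of (a, b, c, d) \<Rightarrow> case N of (a', b', c', d') \<Rightarrow>
     a mod 5 = a' mod 5 \<and> b mod 5 = b' mod 5 \<and> c mod 5 = c' mod 5 \<and> d mod 5 = d' mod 5)"

definition I2 :: mat2 where "I2 = (1, 0, 0, 1)"
definition negI2 :: mat2 where "negI2 = (-1, 0, 0, -1)"
definition S2 :: mat2 where "S2 = (0, -1, 1, 0)"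
definition negS2 :: mat2 where "negS2 = (0, 1, -1, 0)"

definition Gamma_theta5 :: "mat2 set" where
  "Gamma_theta5 = {M \<in> SL2Z. mcong5 M I2 \<or> mcong5 M negI2 \<or> mcong5 M S2 \<or> mcong5 M negS2}"

text \<open>The exponent g(M); the four congruence cases are mutually exclusive.
  Outside of Gamma_theta5 the value is irrelevant (set to 0).\<close>
definition gfun :: "mat2 \<Rightarrow> real" where
  "gfun M = (case M of (a, b, c, d) \<Rightarrow>
     (let r = 2 * real_of_int (a * b) / 5 + 2 * real_of_int (c * d) / 5 in
      if mcong5 M I2 then 6 * real_of_int b / 5 + r
      else if mcong5 M negI2 then 24 * real_of_int b / 5 + r
      else if mcong5 M S2 then 5 + 6 * real_of_int d / 5 + r
      else if mcong5 M negS2 then 5 - 6 * real_of_int d / 5 + r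
      else 0))"

definition nuG :: "int \<Rightarrow> mat2 \<Rightarrow> complex" where
  "nuG k M = exp (\<i> * complex_of_real (pi * real_of_int k * gfun M / 5))"

definition KerNu :: "int \<Rightarrow> mat2 set" where
  "KerNu k = {M \<in> Gamma_theta5. nuG k M = 1}"

end

theory Submission
  imports Defs "HOL-Analysis.Complex_Transcendental"
begin

text \<open>On \<open>\<Gamma>\<^sub>\<theta>\<^sub>,\<^sub>5\<close> the exponent \<open>g(M)\<close> is an integer: the entries that are divisible by 5
  (\<open>b, c\<close> for \<open>M \<equiv> \<plusminus>I\<close>, \<open>a, d\<close> for \<open>M \<equiv> \<plusminus>S\<close>) cancel every denominator. It is even exactly
  when \<open>M \<equiv> \<plusminus>I\<close> (mod 5), because otherwise the constant 5 is the only odd summand.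
  For \<open>k = 5j\<close> with \<open>j\<close> odd, \<open>\<nu>(M) = exp(\<pi> i j g(M))\<close> is 1 iff \<open>j g(M)\<close> is even, i.e. iff
  \<open>g(M)\<close> is even.\<close>

lemma exp_pi_int_eq_1_iff: "exp (\<i> * complex_of_real (pi * of_int t)) = 1 \<longleftrightarrow> even t"
proof -
  have "exp (\<i> * complex_of_real (pi * of_int t)) = 1 \<longleftrightarrow>
      (\<exists>n::int. of_int t = of_int (2 * n) * (1::real))"
    by (simp add: exp_eq_1)
  also have "\<dots> \<longleftrightarrow> even t"
    by (metis dvd_def mult.right_neutral of_int_eq_iff)
  finally show ?thesis .
qed

lemma mcong5_S2_not_pm_I2:
  "mcong5 M S2 \<or> mcong5 M negS2 \<Longrightarrow> \<not> mcong5 M I2 \<and> \<not> mcong5 M negI2"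
  by (cases M) (auto simp: mcong5_def I2_def negI2_def S2_def negS2_def)

lemma gfun_even_if_mcong5_I2:
  assumes "mcong5 M I2"
  shows "\<exists>n. gfun M = of_int (2 * n)"
proof -
  obtain a b c d where M: "M = (a, b, c, d)" by (cases M)
  with assms have "5 dvd b" "5 dvd c"
    by (auto simp: mcong5_def I2_def mod_eq_0_iff_dvd)
  then obtain b' c' where "b = 5 * b'" "c = 5 * c'" by (auto elim!: dvdE)
  with assms M have "gfun M = of_int (2 * (3 * b' + a * b' + c' * d))"
    by (simp add: gfun_def Let_def algebra_simps)
  then show ?thesis ..
qed

lemma gfun_even_if_mcong5_negI2:
  assumes "mcong5 M negI2"
  shows "\<exists>n. gfun M = of_int (2 * n)"
proof -
  obtain a b c d where M: "M = (a, b, c, d)" by (cases M)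
  with assms have "5 dvd b" "5 dvd c" and not_I2: "\<not> mcong5 M I2"
    by (auto simp: mcong5_def I2_def negI2_def mod_eq_0_iff_dvd)
  then obtain b' c' where "b = 5 * b'" "c = 5 * c'" by (auto elim!: dvdE)
  with not_I2 have "gfun M = of_int (2 * (12 * b' + a * b' + c' * d))"
    using assms M by (simp add: gfun_def Let_def algebra_simps)
  then show ?thesis ..
qed

lemma gfun_odd_if_mcong5_S2:
  assumes "mcong5 M S2"
  shows "\<exists>n. gfun M = of_int (2 * n + 1)"
proof -
  obtain a b c d where M: "M = (a, b, c, d)" by (cases M)
  with assms have "5 dvd a" "5 dvd d"
    by (auto simp: mcong5_def S2_def mod_eq_0_iff_dvd)
  then obtain a' d' where "a = 5 * a'" "d = 5 * d'" by (auto elim!: dvdE)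
  moreover have "\<not> mcong5 M I2" "\<not> mcong5 M negI2"
    using assms mcong5_S2_not_pm_I2 by blast+
  ultimately have "gfun M = of_int (2 * (2 + 3 * d' + a' * b + c * d') + 1)"
    using assms M by (simp add: gfun_def Let_def algebra_simps)
  then show ?thesis ..
qed

lemma gfun_odd_if_mcong5_negS2:
  assumes "mcong5 M negS2"
  shows "\<exists>n. gfun M = of_int (2 * n + 1)"
proof -
  obtain a b c d where M: "M = (a, b, c, d)" by (cases M)
  with assms have "5 dvd a" "5 dvd d" and not_S2: "\<not> mcong5 M S2"
    by (auto simp: mcong5_def S2_def negS2_def mod_eq_0_iff_dvd)
  then obtain a' d' where "a = 5 * a'" "d = 5 * d'" by (auto elim!: dvdE)
  moreover have "\<not> mcong5 M I2" "\<not> mcong5 M negI2"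
    using assms mcong5_S2_not_pm_I2 by blast+
  ultimately have "gfun M = of_int (2 * (2 - 3 * d' + a' * b + c * d') + 1)"
    using assms M not_S2 by (simp add: gfun_def Let_def algebra_simps)
  then show ?thesis ..
qed

lemma gfun_integer_parity:
  assumes "M \<in> Gamma_theta5"
  obtains n where "gfun M = of_int n" "even n \<longleftrightarrow> mcong5 M I2 \<or> mcong5 M negI2"
proof -
  consider "mcong5 M I2 \<or> mcong5 M negI2" | "mcong5 M S2 \<or> mcong5 M negS2"
    using assms by (auto simp: Gamma_theta5_def)
  then show thesis
  proof cases
    case 1
    then obtain n where "gfun M = of_int (2 * n)"
      using gfun_even_if_mcong5_I2 gfun_even_if_mcong5_negI2 by blast
    with 1 show thesis by (intro that[of "2 * n"]) auto
  next
    case 2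
    then obtain n where "gfun M = of_int (2 * n + 1)"
      using gfun_odd_if_mcong5_S2 gfun_odd_if_mcong5_negS2 by blast
    with 2 mcong5_S2_not_pm_I2 show thesis by (intro that[of "2 * n + 1"]) auto
  qed
qed

lemma nuG_eq_1_iff_even:
  assumes "k = 5 * j" "odd j" "gfun M = of_int n"
  shows "nuG k M = 1 \<longleftrightarrow> even n"
proof -
  have "pi * of_int k * gfun M / 5 = pi * of_int (j * n)"
    using assms(1,3) by simp
  then have "nuG k M = 1 \<longleftrightarrow> even (j * n)"
    unfolding nuG_def by (simp only: exp_pi_int_eq_1_iff)
  with assms(2) show ?thesis by simp
qed

theorem mainTheorem10:
  fixes k :: int
  assumes "k mod 10 = 5"
  shows "KerNu k = {M \<in> Gamma_theta5. mcong5 M I2 \<or> mcong5 M negI2}"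
proof -
  obtain j where k: "k = 5 * j" "odd j"
  proof
    show "k = 5 * (2 * (k div 10) + 1)" "odd (2 * (k div 10) + 1)"
      using assms div_mult_mod_eq[of k 10] by simp_all
  qed
  have "nuG k M = 1 \<longleftrightarrow> mcong5 M I2 \<or> mcong5 M negI2" if M: "M \<in> Gamma_theta5" for M
  proof -
    obtain n where "gfun M = of_int n" "even n \<longleftrightarrow> mcong5 M I2 \<or> mcong5 M negI2"
      using gfun_integer_parity[OF M] .
    with k nuG_eq_1_iff_even show ?thesis by blast
  qed
  then show ?thesis by (auto simp: KerNu_def)
qed

end
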